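(* Let $V$ be a Möbius MOSVA and $(W,Y_W^L,\rho_W)$ a Möbius left $V$-module. For every $n\ge1$, $u_1,\dots,u_n\in V$, $w\in W$, $w'\in W'$, the series $\langle w',Y_W^o(u_n,z_n)\cdots Y_W^o(u_1,z_1)w\rangle$ converges absolutely when $|z_1|>\cdots>|z_n|>0$ to a rational function with the only possible poles at $z_i=0$ ($i=1,\dots,n$) and $z_i=z_j$ ($1\le i<j\le n$).
   Context: Conventions: $x$ formal variable, $z$'s complex; products of vertex operators paired with a dual vector denote the multiple complex series of coefficients times monomials. A meromorphic open-string vertex algebra (MOSVA) is a $\mathbb Z$-graded vector space $V=\coprod_{n\in\mathbb Z}V_{(n)}$ with a linear map $Y_V:V\otimes V\to V[[x,x^{-1}]]$ and a vacuum $\mathbf 1\in V$ such that: (i) $V_{(n)}=0$ for $n$ sufficiently negative; with $\mathbf d_Vv=nv$ for $v\in V_{(n)}$, $[\mathbf d_V,Y_V(v,x)]=x\frac{d}{dx}Y_V(v,x)+Y_V(\mathbf d_Vv,x)$; (ii) $Y_V(\mathbf 1,x)=1_V$, $Y_V(u,x)\mathbf 1\in V[[x]]$ and $\lim_{x\to0}Y_V(u,x)\mathbf 1=u$; (iii) with $D_Vv=\lim_{x\to0}\frac{d}{dx}Y_V(v,x)\mathbf 1$, $\frac{d}{dx}Y_V(v,x)=Y_V(D_Vv,x)=[D_V,Y_V(v,x)]$; (iv) rationality: with $V'=\coprod_nV_{(n)}^*$, for all $u_1,\dots,u_n,v\in V$, $v'\in V'$, $\langle v',Y_V(u_1,z_1)\cdots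 Y_V(u_n,z_n)v\rangle$ converges absolutely for $|z_1|>\cdots>|z_n|>0$ to a rational function with only possible poles at $z_i=0$, $z_i=z_j$ ($i\ne j$), and $\langle v',Y_V(Y_V(u_1,z_1-z_2)u_2,z_2)v\rangle$ converges absolutely for $|z_2|>|z_1-z_2|>0$ to a rational function with only possible poles at $z_1=0,z_2=0,z_1=z_2$; (v) associativity: these two agree for $|z_1|>|z_2|>|z_1-z_2|>0$. A Möbius MOSVA is a MOSVA with a representation $\rho_V$ of $\mathfrak{sl}(2)$ (basis $L_{-1},L_0,L_1$, $[L_0,L_{\pm1}]=\mp L_{\pm1}$, $[L_{-1},L_1]=-2L_0$) with $L_V(0)=\rho_V(L_0)=\mathbf d_V$, $L_V(-1)=\rho_V(L_{-1})=D_V$, $L_V(1)=\rho_V(L_1)$, and $[L_V(1),Y_V(u,x)]=Y_V(L_V(1)u,x)+2xY_V(L_V(0)u,x)+x^2Y_V(L_V(-1)u,x)$ for $u\in V$. ($L_V(1)$ lowers weight by $1$ and is locally nilpotent.) A left $V$-module is a $\mathbb C$-graded vector space $W=\coprod_{m\in\mathbb C}W_{[m]}$ with a linear map $Y_W^L:V\otimes W\to W[[x,x^{-1}]]$, an operator $\mathbf d_W$ of weight $0$ and an operator $D_W$ of weight $1$ such that: (i) $W_{[m]}=0$ when $\mathrm{Re}(m)$ is sufficiently negative; $\mathbf d_Ww=mw$ for $w\in W_{[m]}$; $[\mathbf d_W,Y_W^L(u,x)]=Y_W^L(\mathbf d_Vu,x)+x\frac{d}{dx}Y_W^L(u,x)$;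 (ii) $Y_W^L(\mathbf 1,x)=1_W$; (iii) $\frac{d}{dx}Y_W^L(u,x)=Y_W^L(D_Vu,x)=[D_W,Y_W^L(u,x)]$; (iv) rationality: with $W'=\coprod_mW_{[m]}^*$, for $u_1,\dots,u_n\in V$, $w\in W$, $w'\in W'$, $\langle w',Y_W^L(u_1,z_1)\cdots Y_W^L(u_n,z_n)w\rangle$ converges absolutely for $|z_1|>\cdots>|z_n|>0$ to a rational function with only possible poles at $z_i=0$ and $z_i=z_j$ ($i\neq j$), and $\langle w',Y_W^L(Y_V(u_1,z_1-z_2)u_2,z_2)w\rangle$ converges absolutely for $|z_2|>|z_1-z_2|>0$ to a rational function with only possible poles at $z_1=0,z_2=0,z_1=z_2$; (v) associativity: $\langle w',Y_W^L(u_1,z_1)Y_W^L(u_2,z_2)w\rangle=\langle w',Y_W^L(Y_V(u_1,z_1-z_2)u_2,z_2)w\rangle$ for $|z_1|>|z_2|>|z_1-z_2|>0$. A Möbius left $V$-module $(W,Y_W^L,\rho_W)$ is a left $V$-module with a representation $\rho_W$ of $\mathfrak{sl}(2)$ on $W$ with $L_W(j)=\rho_W(L_j)$, $L_W(-1)=D_W$, such that for $u\in V$: $[L_W(0),Y_W^L(u,x)]=Y_W^L(L_V(0)u,x)+xY_W^L(L_V(-1)u,x)$, $[L_W(1),Y_W^L(u,x)]=Y_W^L(L_V(1)u,x)+2xY_W^L(L_V(0)u,x)+x^2Y_W^L(L_V(-1)u,x)$, and for every $w\in W_{[n]}$ there is $m\in\mathbb N$ with $(L_W(0)-n)^mw=0$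 (so $\mathbf d_W$ is the semisimple part of $L_W(0)$). The opposite vertex operator is $Y_W^o(u,x)=Y_W^L(e^{xL_V(1)}(-x^{-2})^{L_V(0)}u,x^{-1})$; for homogeneous $u$ this equals $\sum_{m\ge0}\frac{(-1)^{\mathrm{wt}\,u}}{m!}x^{m-2\mathrm{wt}\,u}Y_W^L(L_V(1)^mu,x^{-1})$, a finite sum. *)

theory Defs
  imports "HOL-Analysis.Analysis"
begin

definition graded_space :: "(complex \<Rightarrow> 'a::ab_group_add \<Rightarrow> 'a) \<Rightarrow> ('i \<Rightarrow> 'a set) \<Rightarrow> bool" where
  "graded_space s G \<longleftrightarrow> vector_space s \<and> (\<forall>i. module.subspace s (G i)) \<and>
     (\<forall>v. \<exists>!c. finite {i. c i \<noteq> 0} \<and> (\<forall>i. c i \<in> G i) \<and> v = (\<Sum>i\<in>{i. c i \<noteq> 0}. c i))"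

definition component :: "('i \<Rightarrow> 'a::ab_group_add set) \<Rightarrow> 'i \<Rightarrow> 'a \<Rightarrow> 'a" where
  "component G i v = (THE c. finite {j. c j \<noteq> 0} \<and> (\<forall>j. c j \<in> G j) \<and>
                             v = (\<Sum>j\<in>{j. c j \<noteq> 0}. c j)) i"

definition graded_dual :: "(complex \<Rightarrow> 'a::ab_group_add \<Rightarrow> 'a) \<Rightarrow> ('i \<Rightarrow> 'a set) \<Rightarrow> ('a \<Rightarrow> complex) \<Rightarrow> bool" where
  "graded_dual s G f \<longleftrightarrow> Vector_Spaces.linear s (*) f \<and> finite {i. \<exists>x\<in>G i. f x \<noteq> 0}"

text \<open>A vertex operator map is encoded by its coefficients: Y u w k is the coefficient of x^k
  in Y(u,x)w.  ops Y [u1,...,un] [k1,...,kn] w = (u1)_{k1} ... (un)_{kn} w.\<close>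
fun ops :: "('v \<Rightarrow> 'w \<Rightarrow> int \<Rightarrow> 'w) \<Rightarrow> 'v list \<Rightarrow> int list \<Rightarrow> 'w \<Rightarrow> 'w" where
  "ops Y (u # us) (k # ks) w = Y u (ops Y us ks w) k"
| "ops Y _ _ w = w"

definition monom :: "complex list \<Rightarrow> int list \<Rightarrow> complex" where
  "monom zs ks = (\<Prod>i<length zs. (zs ! i) powi (ks ! i))"

text \<open>Terms of the multiple series  <f, Y(u1,z1)...Y(un,zn) w>, indexed by (k1,...,kn).\<close>
definition prod_series :: "('v \<Rightarrow> 'w \<Rightarrow> int \<Rightarrow> 'w) \<Rightarrow> ('w \<Rightarrow> complex) \<Rightarrow> 'v list \<Rightarrow> complex list \<Rightarrow> 'w \<Rightarrow> int list \<Rightarrow> complex" where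
  "prod_series Y f us zs w = (\<lambda>ks. f (ops Y us ks w) * monom zs ks)"

text \<open>Terms of the double series  <f, Y_W(Y_V(u1,z1-z2)u2,z2) w>.\<close>
definition iter_series :: "('v \<Rightarrow> 'v \<Rightarrow> int \<Rightarrow> 'v) \<Rightarrow> ('v \<Rightarrow> 'w \<Rightarrow> int \<Rightarrow> 'w) \<Rightarrow> ('w \<Rightarrow> complex) \<Rightarrow> 'v \<Rightarrow> 'v \<Rightarrow> complex \<Rightarrow> complex \<Rightarrow> 'w \<Rightarrow> int \<times> int \<Rightarrow> complex" where
  "iter_series YV YW f u1 u2 z1 z2 w = (\<lambda>(k1, k2). f (YW (YV u1 u2 k1) w k2) * (z1 - z2) powi k1 * z2 powi k2)"

definition abs_conv_to :: "('k \<Rightarrow> complex) \<Rightarrow> 'k set \<Rightarrow> complex \<Rightarrow> bool" where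
  "abs_conv_to F I s \<longleftrightarrow> (\<lambda>k. norm (F k)) summable_on I \<and> (F has_sum s) I"

definition polynomial_fn :: "nat \<Rightarrow> (complex list \<Rightarrow> complex) \<Rightarrow> bool" where
  "polynomial_fn n P \<longleftrightarrow> (\<exists>S c. finite S \<and>
     (\<forall>zs. length zs = n \<longrightarrow> P zs = (\<Sum>\<alpha>\<in>S. c \<alpha> * (\<Prod>i<n. (zs ! i) ^ (\<alpha> ! i)))))"

definition rational_poles :: "nat \<Rightarrow> (complex list \<Rightarrow> complex) \<Rightarrow> bool" where
  "rational_poles n R \<longleftrightarrow> (\<exists>P a b. polynomial_fn n P \<and>
     (\<forall>zs. length zs = n \<and> (\<forall>i<n. zs ! i \<noteq> 0) \<and> (\<forall>i j. i < j \<and> j < n \<longrightarrow> zs ! i \<noteq> zs ! j) \<longrightarrow>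
        R zs = P zs / ((\<Prod>i<n. (zs ! i) ^ a i) *
                       (\<Prod>p\<in>{(i, j). i < j \<and> j < n}. (zs ! fst p - zs ! snd p) ^ b (fst p) (snd p)))))"

definition region_desc :: "complex list \<Rightarrow> bool" where
  "region_desc zs \<longleftrightarrow> (\<forall>i. Suc i < length zs \<longrightarrow> norm (zs ! Suc i) < norm (zs ! i)) \<and>
                       (\<forall>i<length zs. zs ! i \<noteq> 0)"

definition product_rationality :: "('i \<Rightarrow> 'w::ab_group_add set) \<Rightarrow> ('w \<Rightarrow> complex) set \<Rightarrow> ('v \<Rightarrow> 'w \<Rightarrow> int \<Rightarrow> 'w) \<Rightarrow> bool" where
  "product_rationality G D Y \<longleftrightarrow> (\<forall>n us w f. f \<in> D \<and> length us = n \<longrightarrow>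
     (\<exists>R. rational_poles n R \<and> (\<forall>zs. length zs = n \<and> region_desc zs \<longrightarrow>
          abs_conv_to (prod_series Y f us zs w) {ks. length ks = n} (R zs))))"

definition iterate_rationality :: "('w \<Rightarrow> complex) set \<Rightarrow> ('v \<Rightarrow> 'v \<Rightarrow> int \<Rightarrow> 'v) \<Rightarrow> ('v \<Rightarrow> 'w \<Rightarrow> int \<Rightarrow> 'w) \<Rightarrow> bool" where
  "iterate_rationality D YV YW \<longleftrightarrow> (\<forall>u1 u2 w f. f \<in> D \<longrightarrow>
     (\<exists>R. rational_poles 2 R \<and> (\<forall>z1 z2. norm z2 > norm (z1 - z2) \<and> norm (z1 - z2) > 0 \<longrightarrow>
          abs_conv_to (iter_series YV YW f u1 u2 z1 z2 w) UNIV (R [z1, z2]))))"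

definition associativity :: "('w \<Rightarrow> complex) set \<Rightarrow> ('v \<Rightarrow> 'v \<Rightarrow> int \<Rightarrow> 'v) \<Rightarrow> ('v \<Rightarrow> 'w \<Rightarrow> int \<Rightarrow> 'w) \<Rightarrow> bool" where
  "associativity D YV YW \<longleftrightarrow> (\<forall>u1 u2 w f z1 z2. f \<in> D \<and>
      norm z1 > norm z2 \<and> norm z2 > norm (z1 - z2) \<and> norm (z1 - z2) > 0 \<longrightarrow>
      infsum (prod_series YW f [u1, u2] [z1, z2] w) {ks. length ks = 2} =
      infsum (iter_series YV YW f u1 u2 z1 z2 w) UNIV)"

record 'v mosva_data =
  vs   :: "complex \<Rightarrow> 'v \<Rightarrow> 'v"
  vgr  :: "int \<Rightarrow> 'v set"
  vY   :: "'v \<Rightarrow> 'v \<Rightarrow> int \<Rightarrow> 'v"   (* vY u v k = coefficient of x^k in Y_V(u,x)v *)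
  vvac :: "'v"
  vd   :: "'v \<Rightarrow> 'v"
  vD   :: "'v \<Rightarrow> 'v"
  vL1  :: "'v \<Rightarrow> 'v"

definition mosva :: "('v::ab_group_add, 'x) mosva_data_scheme \<Rightarrow> bool" where
  "mosva V \<longleftrightarrow>
     graded_space (vs V) (vgr V) \<and>
     (\<forall>u k. Vector_Spaces.linear (vs V) (vs V) (\<lambda>v. vY V u v k)) \<and>
     (\<forall>v k. Vector_Spaces.linear (vs V) (vs V) (\<lambda>u. vY V u v k)) \<and>
     (\<exists>N. \<forall>n<N. vgr V n = {0}) \<and>
     Vector_Spaces.linear (vs V) (vs V) (vd V) \<and>
     (\<forall>n v. v \<in> vgr V n \<longrightarrow> vd V v = vs V (of_int n) v) \<and>
     (\<forall>u v k. vd V (vY V u v k) - vY V u (vd V v) k = vs V (of_int k) (vY V u v k) + vY V (vd V u) v k) \<and>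
     (\<forall>v k. vY V (vvac V) v k = (if k = 0 then v else 0)) \<and>
     (\<forall>u k. k < 0 \<longrightarrow> vY V u (vvac V) k = 0) \<and>
     (\<forall>u. vY V u (vvac V) 0 = u) \<and>
     (\<forall>v. vD V v = vY V v (vvac V) 1) \<and>
     (\<forall>u v k. vs V (of_int (k + 1)) (vY V u v (k + 1)) = vY V (vD V u) v k) \<and>
     (\<forall>u v k. vD V (vY V u v k) - vY V u (vD V v) k = vY V (vD V u) v k) \<and>
     product_rationality (vgr V) {f. graded_dual (vs V) (vgr V) f} (vY V) \<and>
     iterate_rationality {f. graded_dual (vs V) (vgr V) f} (vY V) (vY V) \<and>
     associativity {f. graded_dual (vs V) (vgr V) f} (vY V) (vY V)"

definition mobius_mosva :: "('v::ab_group_add, 'x) mosva_data_scheme \<Rightarrow> bool" where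
  "mobius_mosva V \<longleftrightarrow> mosva V \<and>
     Vector_Spaces.linear (vs V) (vs V) (vD V) \<and>
     Vector_Spaces.linear (vs V) (vs V) (vL1 V) \<and>
     (\<forall>v. vd V (vD V v) - vD V (vd V v) = vD V v) \<and>
     (\<forall>v. vd V (vL1 V v) - vL1 V (vd V v) = - vL1 V v) \<and>
     (\<forall>v. vD V (vL1 V v) - vL1 V (vD V v) = vs V (-2) (vd V v)) \<and>
     (\<forall>u v k. vL1 V (vY V u v k) - vY V u (vL1 V v) k =
        vY V (vL1 V u) v k + vs V 2 (vY V (vd V u) v (k - 1)) + vY V (vD V u) v (k - 2))"

record ('v, 'w) lmod_data =
  ws  :: "complex \<Rightarrow> 'w \<Rightarrow> 'w"
  wgr :: "complex \<Rightarrow> 'w set"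
  wY  :: "'v \<Rightarrow> 'w \<Rightarrow> int \<Rightarrow> 'w"   (* coefficient of x^k in Y^L_W(u,x)w *)
  wd  :: "'w \<Rightarrow> 'w"
  wD  :: "'w \<Rightarrow> 'w"
  wL0 :: "'w \<Rightarrow> 'w"
  wL1 :: "'w \<Rightarrow> 'w"

definition left_module :: "('v::ab_group_add, 'x) mosva_data_scheme \<Rightarrow> ('v, 'w::ab_group_add, 'y) lmod_data_scheme \<Rightarrow> bool" where
  "left_module V W \<longleftrightarrow>
     graded_space (ws W) (wgr W) \<and>
     (\<forall>u k. Vector_Spaces.linear (ws W) (ws W) (\<lambda>w. wY W u w k)) \<and>
     (\<forall>w k. Vector_Spaces.linear (vs V) (ws W) (\<lambda>u. wY W u w k)) \<and>
     (\<exists>R. \<forall>m. Re m < R \<longrightarrow> wgr W m = {0}) \<and>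
     Vector_Spaces.linear (ws W) (ws W) (wd W) \<and>
     (\<forall>m w. w \<in> wgr W m \<longrightarrow> wd W w = ws W m w) \<and>
     (\<forall>u w k. wd W (wY W u w k) - wY W u (wd W w) k = wY W (vd V u) w k + ws W (of_int k) (wY W u w k)) \<and>
     Vector_Spaces.linear (ws W) (ws W) (wD W) \<and>
     (\<forall>m w. w \<in> wgr W m \<longrightarrow> wD W w \<in> wgr W (m + 1)) \<and>
     (\<forall>w k. wY W (vvac V) w k = (if k = 0 then w else 0)) \<and>
     (\<forall>u w k. ws W (of_int (k + 1)) (wY W u w (k + 1)) = wY W (vD V u) w k) \<and>
     (\<forall>u w k. wD W (wY W u w k) - wY W u (wD W w) k = wY W (vD V u) w k) \<and>
     product_rationality (wgr W) {f. graded_dual (ws W) (wgr W) f} (wY W) \<and>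
     iterate_rationality {f. graded_dual (ws W) (wgr W) f} (vY V) (wY W) \<and>
     associativity {f. graded_dual (ws W) (wgr W) f} (vY V) (wY W)"

definition mobius_left_module :: "('v::ab_group_add, 'x) mosva_data_scheme \<Rightarrow> ('v, 'w::ab_group_add, 'y) lmod_data_scheme \<Rightarrow> bool" where
  "mobius_left_module V W \<longleftrightarrow> left_module V W \<and>
     Vector_Spaces.linear (ws W) (ws W) (wL0 W) \<and>
     Vector_Spaces.linear (ws W) (ws W) (wL1 W) \<and>
     (\<forall>w. wL0 W (wD W w) - wD W (wL0 W w) = wD W w) \<and>
     (\<forall>w. wL0 W (wL1 W w) - wL1 W (wL0 W w) = - wL1 W w) \<and>
     (\<forall>w. wD W (wL1 W w) - wL1 W (wD W w) = ws W (-2) (wL0 W w)) \<and>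
     (\<forall>u w k. wL0 W (wY W u w k) - wY W u (wL0 W w) k = wY W (vd V u) w k + wY W (vD V u) w (k - 1)) \<and>
     (\<forall>u w k. wL1 W (wY W u w k) - wY W u (wL1 W w) k =
        wY W (vL1 V u) w k + ws W 2 (wY W (vd V u) w (k - 1)) + wY W (vD V u) w (k - 2)) \<and>
     (\<forall>m w. w \<in> wgr W m \<longrightarrow> (\<exists>j. ((\<lambda>x. wL0 W x - ws W m x) ^^ j) w = 0))"

text \<open>Opposite vertex operator: coefficient of x^k in
  Y^o_W(u,x)w = Y^L_W(e^{x L(1)} (-x^{-2})^{L(0)} u, x^{-1}) w.  For u of weight n this is
  sum over m of (-1)^n/m! times the coefficient of x^(m-2n-k) in Y^L_W(L(1)^m u, x) w;
  a general u is decomposed into its homogeneous components.\<close>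
definition opp_Y :: "('v::ab_group_add, 'x) mosva_data_scheme \<Rightarrow> ('v, 'w::ab_group_add, 'y) lmod_data_scheme \<Rightarrow> 'v \<Rightarrow> 'w \<Rightarrow> int \<Rightarrow> 'w" where
  "opp_Y V W u w k =
     (\<Sum>n\<in>{n. component (vgr V) n u \<noteq> 0}.
        \<Sum>m\<in>{m. (vL1 V ^^ m) (component (vgr V) n u) \<noteq> 0}.
           ws W ((-1) powi n / of_nat (fact m))
             (wY W ((vL1 V ^^ m) (component (vgr V) n u)) w (int m - 2 * n - k)))"

end

theory Submission
  imports Defs
begin

text \<open>For homogeneous \<open>u\<close> of weight \<open>k\<close>, \<open>Y^o(u, x)\<close> is the finite combination
  \<open>\<Sum>\<^sub>m (-1)^k/m! x^(m-2k) Y(L(1)^m u, 1/x)\<close>. Hence every coefficient of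
  \<open>Y^o(u_n, z_n) \<cdots> Y^o(u_1, z_1)\<close> is a finite combination of coefficients of ordinary
  products \<open>Y(v_n, 1/z_n) \<cdots> Y(v_1, 1/z_1)\<close>, with the exponents reindexed by \<open>k \<mapsto> e - k\<close>.
  On \<open>|z_1| > \<cdots> > |z_n| > 0\<close> the reflected variables \<open>1/z_n, \<dots>, 1/z_1\<close> are again in
  descending order, so rationality of products for the module gives absolute convergence, and the
  sum is a finite combination of monomials times rational functions of \<open>1/z_n, \<dots>, 1/z_1\<close>.
  Inverting the variables keeps the poles on the hyperplanes \<open>z_i = 0\<close>, \<open>z_i = z_j\<close>,
  because \<open>1/(1/x - 1/y) = xy/(y - x)\<close>.\<close>

definition power_product :: "nat \<Rightarrow> nat list \<Rightarrow> complex list \<Rightarrow> complex" where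
  "power_product n \<alpha> zs = (\<Prod>i<n. (zs ! i) ^ (\<alpha> ! i))"

lemma polynomial_fn_iff_power_products:
  "polynomial_fn n P \<longleftrightarrow>
     (\<exists>S c. finite S \<and> (\<forall>zs. length zs = n \<longrightarrow> P zs = (\<Sum>\<alpha>\<in>S. c \<alpha> * power_product n \<alpha> zs)))"
  unfolding polynomial_fn_def power_product_def ..

lemma polynomial_fnI:
  assumes "finite X" "\<And>zs. length zs = n \<Longrightarrow> P zs = (\<Sum>x\<in>X. g x * power_product n (h x) zs)"
  shows "polynomial_fn n P"
  unfolding polynomial_fn_iff_power_products
proof (intro exI conjI allI impI)
  show "finite (h ` X)" using assms(1) by simp
  fix zs :: "complex list" assume "length zs = n"
  then have "P zs = (\<Sum>x\<in>X. g x * power_product n (h x) zs)" by (rule assms(2))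
  also have "\<dots> = (\<Sum>y\<in>h ` X. \<Sum>x\<in>{x. x \<in> X \<and> h x = y}. g x * power_product n (h x) zs)"
    by (rule sum.image_gen[OF assms(1)])
  also have "\<dots> = (\<Sum>y\<in>h ` X. (\<Sum>x\<in>{x. x \<in> X \<and> h x = y}. g x) * power_product n y zs)"
    by (intro sum.cong refl) (auto simp: sum_distrib_right)
  finally show "P zs = \<dots>" .
qed

lemma polynomial_fnE:
  assumes "polynomial_fn n P"
  obtains S c where "finite S" "\<And>zs. length zs = n \<Longrightarrow> P zs = (\<Sum>\<alpha>\<in>S. c \<alpha> * power_product n \<alpha> zs)"
  using assms unfolding polynomial_fn_iff_power_products by blast

lemma polynomial_fn_const: "polynomial_fn n (\<lambda>_. c)"
  by (rule polynomial_fnI[where X="{()}" and g="\<lambda>_. c" and h="\<lambda>_. replicate n 0"])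
     (auto simp: power_product_def)

lemma polynomial_fn_var:
  assumes "i < n" shows "polynomial_fn n (\<lambda>zs. zs ! i)"
proof (rule polynomial_fnI[where X="{()}" and g="\<lambda>_. 1" and h="\<lambda>_. (replicate n 0)[i := 1]"])
  fix zs :: "complex list"
  have "power_product n ((replicate n 0)[i := 1]) zs = (\<Prod>j<n. if j = i then zs ! j else 1)"
    unfolding power_product_def by (intro prod.cong refl) (auto simp: nth_list_update assms)
  then show "zs ! i = (\<Sum>x\<in>{()}. 1 * power_product n ((replicate n 0)[i := 1]) zs)"
    using assms by simp
qed simp

lemma polynomial_fn_add:
  assumes "polynomial_fn n P" "polynomial_fn n Q"
  shows "polynomial_fn n (\<lambda>zs. P zs + Q zs)"
proof -
  obtain S c where S: "finite S" "\<And>zs. length zs = n \<Longrightarrow> P zs = (\<Sum>\<alpha>\<in>S. c \<alpha> * power_product n \<alpha> zs)"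
    using polynomial_fnE[OF assms(1)] by blast
  obtain T d where T: "finite T" "\<And>zs. length zs = n \<Longrightarrow> Q zs = (\<Sum>\<alpha>\<in>T. d \<alpha> * power_product n \<alpha> zs)"
    using polynomial_fnE[OF assms(2)] by blast
  show ?thesis
    by (rule polynomial_fnI[where X="S <+> T" and g="case_sum c d" and h="case_sum id id"])
       (use S T in \<open>auto simp: sum.Plus o_def\<close>)
qed

lemma power_product_mult:
  "power_product n (map (\<lambda>i. \<alpha> ! i + \<beta> ! i) [0..<n]) zs = power_product n \<alpha> zs * power_product n \<beta> zs"
  unfolding power_product_def by (simp add: power_add prod.distrib)

lemma polynomial_fn_mult:
  assumes "polynomial_fn n P" "polynomial_fn n Q"
  shows "polynomial_fn n (\<lambda>zs. P zs * Q zs)"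
proof -
  obtain S c where S: "finite S" "\<And>zs. length zs = n \<Longrightarrow> P zs = (\<Sum>\<alpha>\<in>S. c \<alpha> * power_product n \<alpha> zs)"
    using polynomial_fnE[OF assms(1)] by blast
  obtain T d where T: "finite T" "\<And>zs. length zs = n \<Longrightarrow> Q zs = (\<Sum>\<alpha>\<in>T. d \<alpha> * power_product n \<alpha> zs)"
    using polynomial_fnE[OF assms(2)] by blast
  show ?thesis
  proof (rule polynomial_fnI[where X="S \<times> T" and g="\<lambda>(\<alpha>, \<beta>). c \<alpha> * d \<beta>"
        and h="\<lambda>(\<alpha>, \<beta>). map (\<lambda>i. \<alpha> ! i + \<beta> ! i) [0..<n]"])
    fix zs :: "complex list" assume "length zs = n"
    then have "P zs * Q zs = (\<Sum>(\<alpha>, \<beta>)\<in>S \<times> T. (c \<alpha> * power_product n \<alpha> zs) * (d \<beta> * power_product n \<beta> zs))"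
      using S(2) T(2) by (simp add: sum_product sum.cartesian_product)
    also have "\<dots> = (\<Sum>x\<in>S \<times> T. (case x of (\<alpha>, \<beta>) \<Rightarrow> c \<alpha> * d \<beta>) *
         power_product n (case x of (\<alpha>, \<beta>) \<Rightarrow> map (\<lambda>i. \<alpha> ! i + \<beta> ! i) [0..<n]) zs)"
      by (intro sum.cong refl) (auto simp: power_product_mult)
    finally show "P zs * Q zs = \<dots>" .
  qed (use S T in auto)
qed

lemma polynomial_fn_diff:
  assumes "polynomial_fn n P" "polynomial_fn n Q"
  shows "polynomial_fn n (\<lambda>zs. P zs - Q zs)"
  using polynomial_fn_add[OF assms(1) polynomial_fn_mult[OF polynomial_fn_const[of n "-1"] assms(2)]]
  by simp

lemma polynomial_fn_prod:
  assumes "finite A" "\<And>a. a \<in> A \<Longrightarrow> polynomial_fn n (P a)"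
  shows "polynomial_fn n (\<lambda>zs. \<Prod>a\<in>A. P a zs)"
  using assms by (induction A rule: finite_induct) (auto intro: polynomial_fn_mult polynomial_fn_const)

lemma polynomial_fn_power:
  assumes "polynomial_fn n P" shows "polynomial_fn n (\<lambda>zs. P zs ^ k)"
  by (induction k) (auto intro: polynomial_fn_mult polynomial_fn_const assms)

section \<open>Rational functions with poles on the coordinate and diagonal hyperplanes\<close>

definition off_poles :: "nat \<Rightarrow> complex list \<Rightarrow> bool" where
  "off_poles n zs \<longleftrightarrow> length zs = n \<and> (\<forall>i<n. zs ! i \<noteq> 0) \<and>
     (\<forall>i j. i < j \<and> j < n \<longrightarrow> zs ! i \<noteq> zs ! j)"

definition coordinate_product :: "nat \<Rightarrow> (nat \<Rightarrow> nat) \<Rightarrow> complex list \<Rightarrow> complex" where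
  "coordinate_product n a zs = (\<Prod>i<n. (zs ! i) ^ a i)"

definition diagonal_product :: "nat \<Rightarrow> (nat \<Rightarrow> nat \<Rightarrow> nat) \<Rightarrow> complex list \<Rightarrow> complex" where
  "diagonal_product n b zs = (\<Prod>p\<in>{(i, j). i < j \<and> j < n}. (zs ! fst p - zs ! snd p) ^ b (fst p) (snd p))"

lemma finite_ordered_pairs: "finite {(i, j). i < j \<and> j < (n::nat)}"
  by (rule finite_subset[of _ "{..<n} \<times> {..<n}"]) auto

lemma rational_poles_iff:
  "rational_poles n R \<longleftrightarrow> (\<exists>P a b. polynomial_fn n P \<and>
     (\<forall>zs. off_poles n zs \<longrightarrow> R zs = P zs / (coordinate_product n a zs * diagonal_product n b zs)))"
  unfolding rational_poles_def off_poles_def coordinate_product_def diagonal_product_def ..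

lemma rational_polesE:
  assumes "rational_poles n R"
  obtains P a b where "polynomial_fn n P"
    "\<And>zs. off_poles n zs \<Longrightarrow> R zs = P zs / (coordinate_product n a zs * diagonal_product n b zs)"
  using assms unfolding rational_poles_iff by blast

lemma coordinate_product_nonzero: "off_poles n zs \<Longrightarrow> coordinate_product n a zs \<noteq> 0"
  unfolding coordinate_product_def off_poles_def by auto

lemma diagonal_product_nonzero: "off_poles n zs \<Longrightarrow> diagonal_product n b zs \<noteq> 0"
  unfolding diagonal_product_def off_poles_def by (auto simp: prod_zero_iff finite_ordered_pairs)

lemma coordinate_product_add:
  "coordinate_product n (\<lambda>i. a i + a' i) zs = coordinate_product n a zs * coordinate_product n a' zs"
  unfolding coordinate_product_def by (simp add: power_add prod.distrib)

lemma diagonal_product_add: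
  "diagonal_product n (\<lambda>i j. b i j + b' i j) zs = diagonal_product n b zs * diagonal_product n b' zs"
  unfolding diagonal_product_def by (simp add: power_add prod.distrib)

lemma polynomial_fn_coordinate_product: "polynomial_fn n (coordinate_product n a)"
  unfolding coordinate_product_def
  by (intro polynomial_fn_prod polynomial_fn_power polynomial_fn_var) auto

lemma polynomial_fn_diagonal_product: "polynomial_fn n (diagonal_product n b)"
  unfolding diagonal_product_def
  by (intro polynomial_fn_prod polynomial_fn_power polynomial_fn_diff polynomial_fn_var
      finite_ordered_pairs) auto

lemma rational_poles_cong:
  "rational_poles n F \<Longrightarrow> (\<And>zs. off_poles n zs \<Longrightarrow> G zs = F zs) \<Longrightarrow> rational_poles n G"
  unfolding rational_poles_iff by metis

lemma rational_poles_polynomial: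
  assumes "polynomial_fn n P" shows "rational_poles n P"
  unfolding rational_poles_iff
  by (rule exI[of _ P], rule exI[of _ "\<lambda>_. 0"], rule exI[of _ "\<lambda>_ _. 0"])
     (simp add: assms coordinate_product_def diagonal_product_def)

lemma rational_poles_const: "rational_poles n (\<lambda>_. c)"
  by (rule rational_poles_polynomial[OF polynomial_fn_const])

lemma rational_poles_var: "i < n \<Longrightarrow> rational_poles n (\<lambda>zs. zs ! i)"
  by (rule rational_poles_polynomial[OF polynomial_fn_var])

lemma rational_poles_mult:
  assumes "rational_poles n F" "rational_poles n G"
  shows "rational_poles n (\<lambda>zs. F zs * G zs)"
proof -
  obtain P a b where P: "polynomial_fn n P"
    "\<And>zs. off_poles n zs \<Longrightarrow> F zs = P zs / (coordinate_product n a zs * diagonal_product n b zs)"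
    using rational_polesE[OF assms(1)] by blast
  obtain Q a' b' where Q: "polynomial_fn n Q"
    "\<And>zs. off_poles n zs \<Longrightarrow> G zs = Q zs / (coordinate_product n a' zs * diagonal_product n b' zs)"
    using rational_polesE[OF assms(2)] by blast
  show ?thesis unfolding rational_poles_iff
  proof (intro exI conjI allI impI)
    show "polynomial_fn n (\<lambda>zs. P zs * Q zs)" by (rule polynomial_fn_mult[OF P(1) Q(1)])
    fix zs assume "off_poles n zs"
    then show "F zs * G zs = P zs * Q zs /
        (coordinate_product n (\<lambda>i. a i + a' i) zs * diagonal_product n (\<lambda>i j. b i j + b' i j) zs)"
      by (simp add: P(2) Q(2) coordinate_product_add diagonal_product_add)
  qed
qed

lemma rational_poles_add:
  assumes "rational_poles n F" "rational_poles n G"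
  shows "rational_poles n (\<lambda>zs. F zs + G zs)"
proof -
  obtain P a b where P: "polynomial_fn n P"
    "\<And>zs. off_poles n zs \<Longrightarrow> F zs = P zs / (coordinate_product n a zs * diagonal_product n b zs)"
    using rational_polesE[OF assms(1)] by blast
  obtain Q a' b' where Q: "polynomial_fn n Q"
    "\<And>zs. off_poles n zs \<Longrightarrow> G zs = Q zs / (coordinate_product n a' zs * diagonal_product n b' zs)"
    using rational_polesE[OF assms(2)] by blast
  show ?thesis unfolding rational_poles_iff
  proof (intro exI conjI allI impI)
    show "polynomial_fn n (\<lambda>zs. P zs * (coordinate_product n a' zs * diagonal_product n b' zs) +
        Q zs * (coordinate_product n a zs * diagonal_product n b zs))"
      by (intro polynomial_fn_add polynomial_fn_mult P(1) Q(1)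
          polynomial_fn_coordinate_product polynomial_fn_diagonal_product)
    fix zs assume z: "off_poles n zs"
    then show "F zs + G zs = (P zs * (coordinate_product n a' zs * diagonal_product n b' zs) +
        Q zs * (coordinate_product n a zs * diagonal_product n b zs)) /
        (coordinate_product n (\<lambda>i. a i + a' i) zs * diagonal_product n (\<lambda>i j. b i j + b' i j) zs)"
      using coordinate_product_nonzero[OF z] diagonal_product_nonzero[OF z]
      by (simp add: P(2) Q(2) coordinate_product_add diagonal_product_add field_simps)
  qed
qed

lemma rational_poles_sum:
  assumes "finite A" "\<And>a. a \<in> A \<Longrightarrow> rational_poles n (F a)"
  shows "rational_poles n (\<lambda>zs. \<Sum>a\<in>A. F a zs)"
  using assms by (induction A rule: finite_induct) (auto intro: rational_poles_add rational_poles_const)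

lemma rational_poles_prod:
  assumes "finite A" "\<And>a. a \<in> A \<Longrightarrow> rational_poles n (F a)"
  shows "rational_poles n (\<lambda>zs. \<Prod>a\<in>A. F a zs)"
  using assms by (induction A rule: finite_induct) (auto intro: rational_poles_mult rational_poles_const)

lemma rational_poles_power:
  assumes "rational_poles n F" shows "rational_poles n (\<lambda>zs. F zs ^ k)"
  by (induction k) (auto intro: rational_poles_mult rational_poles_const assms)

lemma rational_poles_inverse_var:
  assumes "j < n" shows "rational_poles n (\<lambda>zs. inverse (zs ! j))"
  unfolding rational_poles_iff
proof (intro exI conjI allI impI)
  show "polynomial_fn n (\<lambda>_. 1)" by (rule polynomial_fn_const)
  fix zs :: "complex list"
  have "coordinate_product n (\<lambda>i. if i = j then 1 else 0) zs = (\<Prod>i<n. if i = j then zs ! i else 1)"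
    unfolding coordinate_product_def by (intro prod.cong) auto
  also have "\<dots> = zs ! j" using assms by simp
  finally show "inverse (zs ! j) =
      1 / (coordinate_product n (\<lambda>i. if i = j then 1 else 0) zs * diagonal_product n (\<lambda>_ _. 0) zs)"
    by (simp add: diagonal_product_def divide_inverse)
qed

lemma rational_poles_inverse_diff:
  assumes "p < q" "q < n" shows "rational_poles n (\<lambda>zs. inverse (zs ! p - zs ! q))"
  unfolding rational_poles_iff
proof (intro exI conjI allI impI)
  show "polynomial_fn n (\<lambda>_. 1)" by (rule polynomial_fn_const)
  fix zs :: "complex list"
  have "diagonal_product n (\<lambda>i j. if i = p \<and> j = q then 1 else 0) zs =
      (\<Prod>x\<in>{(i, j). i < j \<and> j < n}. if x = (p, q) then zs ! fst x - zs ! snd x else 1)"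
    unfolding diagonal_product_def by (intro prod.cong) auto
  also have "\<dots> = zs ! p - zs ! q" using assms by (simp add: prod.delta' finite_ordered_pairs)
  finally show "inverse (zs ! p - zs ! q) =
      1 / (coordinate_product n (\<lambda>_. 0) zs * diagonal_product n (\<lambda>i j. if i = p \<and> j = q then 1 else 0) zs)"
    by (simp add: coordinate_product_def divide_inverse)
qed

lemma rational_poles_power_int_var:
  assumes "j < n" shows "rational_poles n (\<lambda>zs. zs ! j powi e)"
proof (cases "e \<ge> 0")
  case True
  then show ?thesis by (simp add: power_int_def rational_poles_power rational_poles_var assms)
next
  case False
  then show ?thesis by (simp add: power_int_def rational_poles_power rational_poles_inverse_var assms)
qed

section \<open>Inverting the variables\<close>

definition reflect :: "complex list \<Rightarrow> complex list" where
  "reflect zs = map inverse (rev zs)"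

lemma length_reflect [simp]: "length (reflect zs) = length zs"
  by (simp add: reflect_def)

lemma nth_reflect: "i < length zs \<Longrightarrow> reflect zs ! i = inverse (zs ! (length zs - Suc i))"
  by (simp add: reflect_def rev_nth)

lemma off_poles_reflect:
  assumes "off_poles n zs" shows "off_poles n (reflect zs)"
proof -
  have n: "length zs = n" using assms by (simp add: off_poles_def)
  have "zs ! (n - Suc i) \<noteq> zs ! (n - Suc j)" if "i < j" "j < n" for i j
  proof -
    have "n - Suc j < n - Suc i" "n - Suc i < n" using that by auto
    then show ?thesis using assms unfolding off_poles_def by (metis (no_types))
  qed
  then show ?thesis using assms n by (auto simp: off_poles_def nth_reflect)
qed

lemma region_desc_reflect:
  assumes "region_desc zs" shows "region_desc (reflect zs)"
  unfolding region_desc_def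
proof (intro conjI allI impI)
  fix i assume i: "Suc i < length (reflect zs)"
  let ?n = "length zs"
  have "Suc (?n - Suc (Suc i)) < ?n" "Suc (?n - Suc (Suc i)) = ?n - Suc i" using i by auto
  then have "norm (zs ! (?n - Suc i)) < norm (zs ! (?n - Suc (Suc i)))"
    using assms unfolding region_desc_def by metis
  moreover have "zs ! (?n - Suc i) \<noteq> 0" using assms i unfolding region_desc_def by auto
  ultimately show "norm (reflect zs ! Suc i) < norm (reflect zs ! i)"
    using i by (simp add: nth_reflect norm_inverse less_imp_inverse_less)
next
  fix i assume "i < length (reflect zs)"
  then show "reflect zs ! i \<noteq> 0" using assms unfolding region_desc_def by (simp add: nth_reflect)
qed

lemma rational_poles_polynomial_comp:
  assumes "polynomial_fn n P" "\<And>i. i < n \<Longrightarrow> rational_poles m (\<lambda>zs. G zs ! i)"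
    and "\<And>zs. length zs = m \<Longrightarrow> length (G zs) = n"
  shows "rational_poles m (\<lambda>zs. P (G zs))"
proof -
  obtain S c where S: "finite S" "\<And>zs. length zs = n \<Longrightarrow> P zs = (\<Sum>\<alpha>\<in>S. c \<alpha> * power_product n \<alpha> zs)"
    using polynomial_fnE[OF assms(1)] by blast
  have "rational_poles m (\<lambda>zs. \<Sum>\<alpha>\<in>S. c \<alpha> * power_product n \<alpha> (G zs))"
    unfolding power_product_def
    by (intro rational_poles_sum rational_poles_mult rational_poles_const rational_poles_prod
        rational_poles_power assms(2) S(1)) auto
  then show ?thesis
    by (rule rational_poles_cong) (simp add: S(2) assms(3) off_poles_def)
qed

lemma rational_poles_reflect_var:
  assumes "i < n" shows "rational_poles n (\<lambda>zs. reflect zs ! i)"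
  by (rule rational_poles_cong[OF rational_poles_inverse_var[of "n - Suc i" n]])
     (use assms in \<open>auto simp: off_poles_def nth_reflect\<close>)

lemma rational_poles_inverse_reflect_diff:
  assumes "i < j" "j < n"
  shows "rational_poles n (\<lambda>zs. inverse (reflect zs ! i - reflect zs ! j))"
proof (rule rational_poles_cong)
  let ?x = "\<lambda>zs. zs ! (n - Suc i)" and ?y = "\<lambda>zs. zs ! (n - Suc j)"
  show "rational_poles n (\<lambda>zs. ?y zs * ?x zs * inverse (?y zs - ?x zs))"
    using assms by (intro rational_poles_mult rational_poles_var rational_poles_inverse_diff) auto
  fix zs assume z: "off_poles n zs"
  then have "?x zs \<noteq> 0" "?y zs \<noteq> 0" "?x zs \<noteq> ?y zs" "length zs = n"
    using assms off_poles_reflect[OF z] unfolding off_poles_def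
    by (auto simp: nth_reflect)
  then show "inverse (reflect zs ! i - reflect zs ! j) = ?y zs * ?x zs * inverse (?y zs - ?x zs)"
    using assms by (simp add: nth_reflect field_simps)
qed

lemma rational_poles_reflect:
  assumes "rational_poles n R" shows "rational_poles n (\<lambda>zs. R (reflect zs))"
proof -
  obtain P a b where P: "polynomial_fn n P"
    "\<And>zs. off_poles n zs \<Longrightarrow> R zs = P zs / (coordinate_product n a zs * diagonal_product n b zs)"
    using rational_polesE[OF assms] by blast
  let ?F = "\<lambda>zs. P (reflect zs) * (\<Prod>i<n. zs ! (n - Suc i) ^ a i) *
    (\<Prod>p\<in>{(i, j). i < j \<and> j < n}. inverse (reflect zs ! fst p - reflect zs ! snd p) ^ b (fst p) (snd p))"
  show ?thesis
  proof (rule rational_poles_cong)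
    have "rational_poles n (\<lambda>zs. P (reflect zs))"
      by (intro rational_poles_polynomial_comp[OF P(1)] rational_poles_reflect_var) auto
    moreover have "rational_poles n (\<lambda>zs. \<Prod>i<n. zs ! (n - Suc i) ^ a i)"
      by (intro rational_poles_prod rational_poles_power rational_poles_var) auto
    moreover have "rational_poles n (\<lambda>zs. \<Prod>p\<in>{(i, j). i < j \<and> j < n}.
        inverse (reflect zs ! fst p - reflect zs ! snd p) ^ b (fst p) (snd p))"
      by (intro rational_poles_prod rational_poles_power finite_ordered_pairs
          rational_poles_inverse_reflect_diff) auto
    ultimately show "rational_poles n ?F" by (intro rational_poles_mult)
    fix zs assume z: "off_poles n zs"
    then have "inverse (coordinate_product n a (reflect zs)) = (\<Prod>i<n. zs ! (n - Suc i) ^ a i)"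
      by (simp add: coordinate_product_def off_poles_def nth_reflect power_inverse
          flip: prod_inversef)
    moreover have "inverse (diagonal_product n b (reflect zs)) = (\<Prod>p\<in>{(i, j). i < j \<and> j < n}.
        inverse (reflect zs ! fst p - reflect zs ! snd p) ^ b (fst p) (snd p))"
      by (simp add: diagonal_product_def power_inverse flip: prod_inversef)
    ultimately show "R (reflect zs) = ?F zs"
      by (simp add: P(2) off_poles_reflect[OF z] divide_inverse mult.assoc)
  qed
qed

lemma rational_poles_monom_rev:
  assumes "length es = n" shows "rational_poles n (\<lambda>zs. monom (rev zs) es)"
proof (rule rational_poles_cong)
  show "rational_poles n (\<lambda>zs. \<Prod>i<n. zs ! (n - Suc i) powi (es ! i))"
    by (intro rational_poles_prod rational_poles_power_int_var) auto
qed (simp add: monom_def off_poles_def rev_nth)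

section \<open>Expansion of products of opposite vertex operators\<close>

lemma set_Cons_eq_image: "set_Cons A XS = (\<lambda>(x, xs). x # xs) ` (A \<times> XS)"
  by (auto simp: set_Cons_def)

lemma finite_listset: "(\<And>A. A \<in> set As \<Longrightarrow> finite A) \<Longrightarrow> finite (listset As)"
  by (induction As) (auto simp: set_Cons_eq_image)

lemma length_listset: "xs \<in> listset As \<Longrightarrow> length xs = length As"
  by (induction As arbitrary: xs) (auto simp: set_Cons_def)

lemma ops_linear_combination:
  assumes s: "module s" and lin: "\<And>u k. Vector_Spaces.linear s s (\<lambda>w. Y u w k)"
    and Yo: "\<And>u w k. Yo u w k = (\<Sum>a\<in>T u. s (c a) (Y (v u a) w (e a - k)))"
    and fin: "\<And>u. finite (T u)"
  shows "length ks = length us \<Longrightarrow> ops Yo us ks w =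
     (\<Sum>as\<in>listset (map T us). s (prod_list (map c as)) (ops Y (map2 v us as) (map2 (-) (map e as) ks) w))"
proof (induction us arbitrary: ks)
  case Nil
  then show ?case using module.scale_one[OF s] by simp
next
  case (Cons u us)
  then obtain k ks' where ks: "ks = k # ks'" and l: "length ks' = length us" by (cases ks) auto
  define G where "G as = ops Y (map2 v us as) (map2 (-) (map e as) ks') w" for as
  have "ops Yo (u # us) ks w =
      (\<Sum>a\<in>T u. s (c a) (Y (v u a) (\<Sum>as\<in>listset (map T us). s (prod_list (map c as)) (G as)) (e a - k)))"
    by (simp add: ks Yo Cons.IH[OF l] G_def)
  also have "\<dots> = (\<Sum>a\<in>T u. \<Sum>as\<in>listset (map T us). s (c a * prod_list (map c as)) (Y (v u a) (G as) (e a - k)))"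
    by (simp add: module_hom.sum[OF module_hom_linearI[OF lin]]
        module_hom.scale[OF module_hom_linearI[OF lin]]
        module.scale_sum_right[OF s] module.scale_scale[OF s])
  also have "\<dots> = (\<Sum>(a, as)\<in>T u \<times> listset (map T us). s (c a * prod_list (map c as)) (Y (v u a) (G as) (e a - k)))"
    by (simp add: sum.cartesian_product)
  also have "\<dots> = (\<Sum>bs\<in>listset (map T (u # us)).
      s (prod_list (map c bs)) (ops Y (map2 v (u # us) bs) (map2 (-) (map e bs) ks) w))"
    by (simp add: set_Cons_eq_image sum.reindex inj_on_def ks G_def case_prod_beta)
  finally show ?case .
qed

text \<open>The sums in \<open>opp_Y\<close> range over sets that need not be finite (local nilpotence of
  \<open>L(1)\<close> is not among the axioms); for an infinite index set Isabelle's sum is \<open>0\<close>, and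
  this is mirrored by the empty index set here.\<close>

definition opp_terms :: "('v::ab_group_add, 'x) mosva_data_scheme \<Rightarrow> 'v \<Rightarrow> (int \<times> nat) set" where
  "opp_terms V u = (if finite {n. component (vgr V) n u \<noteq> 0}
     then (SIGMA n:{n. component (vgr V) n u \<noteq> 0}.
            (if finite {m. (vL1 V ^^ m) (component (vgr V) n u) \<noteq> 0}
             then {m. (vL1 V ^^ m) (component (vgr V) n u) \<noteq> 0} else {}))
     else {})"

definition opp_coefficient :: "int \<times> nat \<Rightarrow> complex" where
  "opp_coefficient a = (-1) powi (fst a) / of_nat (fact (snd a))"

definition opp_vector :: "('v::ab_group_add, 'x) mosva_data_scheme \<Rightarrow> 'v \<Rightarrow> int \<times> nat \<Rightarrow> 'v" where
  "opp_vector V u a = (vL1 V ^^ snd a) (component (vgr V) (fst a) u)"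

definition opp_exponent :: "int \<times> nat \<Rightarrow> int" where
  "opp_exponent a = int (snd a) - 2 * fst a"

lemma finite_opp_terms: "finite (opp_terms V u)"
  unfolding opp_terms_def by (auto intro!: finite_SigmaI)

lemma opp_Y_eq_sum:
  "opp_Y V W u w k = (\<Sum>a\<in>opp_terms V u.
     ws W (opp_coefficient a) (wY W (opp_vector V u a) w (opp_exponent a - k)))"
proof (cases "finite {n. component (vgr V) n u \<noteq> 0}")
  case True
  have "opp_Y V W u w k = (\<Sum>n\<in>{n. component (vgr V) n u \<noteq> 0}.
     \<Sum>m\<in>(if finite {m. (vL1 V ^^ m) (component (vgr V) n u) \<noteq> 0}
             then {m. (vL1 V ^^ m) (component (vgr V) n u) \<noteq> 0} else {}).
       ws W (opp_coefficient (n, m)) (wY W (opp_vector V u (n, m)) w (opp_exponent (n, m) - k)))"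
    unfolding opp_Y_def
    by (rule sum.cong[OF refl])
       (auto simp: opp_coefficient_def opp_vector_def opp_exponent_def algebra_simps intro!: sum.cong)
  also have "\<dots> = (\<Sum>a\<in>opp_terms V u.
      ws W (opp_coefficient a) (wY W (opp_vector V u a) w (opp_exponent a - k)))"
    unfolding opp_terms_def using True by (subst sum.Sigma) auto
  finally show ?thesis .
next
  case False
  then show ?thesis unfolding opp_Y_def opp_terms_def by simp
qed

lemma opp_Y_ops_expansion:
  assumes "left_module V W" "Vector_Spaces.linear (ws W) (*) f" "length ks = length us"
  shows "f (ops (opp_Y V W) us ks w) = (\<Sum>as\<in>listset (map (opp_terms V) us).
     prod_list (map opp_coefficient as) *
     f (ops (wY W) (map2 (opp_vector V) us as) (map2 (-) (map opp_exponent as) ks) w))"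
proof -
  have module: "module (ws W)"
    using assms(1) by (simp add: left_module_def graded_space_def module_iff_vector_space)
  have linear: "\<And>u k. Vector_Spaces.linear (ws W) (ws W) (\<lambda>w. wY W u w k)"
    using assms(1) by (simp add: left_module_def)
  have "ops (opp_Y V W) us ks w = (\<Sum>as\<in>listset (map (opp_terms V) us).
     ws W (prod_list (map opp_coefficient as))
       (ops (wY W) (map2 (opp_vector V) us as) (map2 (-) (map opp_exponent as) ks) w))"
    by (rule ops_linear_combination[where Yo="opp_Y V W" and T="opp_terms V",
          OF module linear opp_Y_eq_sum finite_opp_terms assms(3)])
  then show ?thesis
    by (simp add: module_hom.sum[OF module_hom_linearI[OF assms(2)]]
        module_hom.scale[OF module_hom_linearI[OF assms(2)]])
qed

lemma has_sum_sum:
  fixes f :: "'i \<Rightarrow> 'a \<Rightarrow> 'b::topological_comm_monoid_add"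
  assumes "finite I" "\<And>i. i \<in> I \<Longrightarrow> (f i has_sum s i) A"
  shows "((\<lambda>x. \<Sum>i\<in>I. f i x) has_sum (\<Sum>i\<in>I. s i)) A"
  using assms by (induction I rule: finite_induct) (auto intro: has_sum_add)

lemma abs_conv_to_finite_combination:
  assumes "finite I"
    and conv: "\<And>i. i \<in> I \<Longrightarrow> abs_conv_to (F i) A (s i)"
    and bij: "\<And>i. i \<in> I \<Longrightarrow> bij_betw (J i) A A"
    and G: "\<And>x. x \<in> A \<Longrightarrow> G x = (\<Sum>i\<in>I. c i * F i (J i x))"
  shows "abs_conv_to G A (\<Sum>i\<in>I. c i * s i)"
  unfolding abs_conv_to_def
proof
  have "((\<lambda>x. \<Sum>i\<in>I. c i * F i (J i x)) has_sum (\<Sum>i\<in>I. c i * s i)) A"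
  proof (rule has_sum_sum[OF assms(1)])
    fix i assume i: "i \<in> I"
    have "(F i has_sum s i) A" using conv[OF i] by (simp add: abs_conv_to_def)
    then have "((\<lambda>x. F i (J i x)) has_sum s i) A"
      using has_sum_reindex_bij_betw[OF bij[OF i]] by blast
    then show "((\<lambda>x. c i * F i (J i x)) has_sum c i * s i) A" by (rule has_sum_cmult_right)
  qed
  then show "(G has_sum (\<Sum>i\<in>I. c i * s i)) A" by (simp add: G cong: has_sum_cong)
  have "(\<lambda>x. \<Sum>i\<in>I. norm (c i) * norm (F i (J i x))) summable_on A"
  proof (rule has_sum_imp_summable, rule has_sum_sum[OF assms(1)])
    fix i assume i: "i \<in> I"
    have "(\<lambda>x. norm (F i x)) summable_on A" using conv[OF i] by (simp add: abs_conv_to_def)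
    then have "(\<lambda>x. norm (F i (J i x))) summable_on A"
      using summable_on_reindex_bij_betw[OF bij[OF i], where f="\<lambda>x. norm (F i x)"] by simp
    then show "((\<lambda>x. norm (c i) * norm (F i (J i x))) has_sum
        infsum (\<lambda>x. norm (c i) * norm (F i (J i x))) A) A"
      by (intro summable_on_cmult_right summable_iff_has_sum_infsum[THEN iffD1])
  qed
  then show "(\<lambda>x. norm (G x)) summable_on A"
  proof (rule summable_on_comparison_test)
    show "norm (G x) \<le> (\<Sum>i\<in>I. norm (c i) * norm (F i (J i x)))" if "x \<in> A" for x
      using norm_sum[of "\<lambda>i. c i * F i (J i x)" I] by (simp add: G[OF that] norm_mult)
  qed simp
qed

section \<open>Rationality of products of opposite vertex operators\<close>

lemma bij_betw_map2_diff:
  fixes es :: "int list"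
  assumes "length es = n"
  shows "bij_betw (\<lambda>ks. map2 (-) es ks) {ks. length ks = n} {ks. length ks = (n::nat)}"
  by (rule bij_betw_byWitness[where f'="\<lambda>ks. map2 (-) es ks"])
     (auto intro!: nth_equalityI simp: assms)

lemma monom_shift:
  assumes "length ks = length zs" "length es = length zs" "\<And>i. i < length zs \<Longrightarrow> zs ! i \<noteq> 0"
  shows "monom zs ks = monom zs es * monom (map inverse zs) (map2 (-) es ks)"
proof -
  have "zs ! i powi (ks ! i) = zs ! i powi (es ! i) * inverse (zs ! i) powi (es ! i - ks ! i)"
    if "i < length zs" for i
    using assms(3)[OF that] by (simp add: power_int_inverse power_int_diff field_simps)
  then show ?thesis
    using assms(1,2) by (simp add: monom_def prod.distrib[symmetric])
qed

lemma opp_series_term_expansion: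
  assumes "left_module V W" "Vector_Spaces.linear (ws W) (*) f"
    and "length ks = length us" "length zs = length us" "\<And>i. i < length zs \<Longrightarrow> zs ! i \<noteq> 0"
  shows "f (ops (opp_Y V W) us ks w) * monom zs ks = (\<Sum>as\<in>listset (map (opp_terms V) us).
     (prod_list (map opp_coefficient as) * monom zs (map opp_exponent as)) *
     prod_series (wY W) f (map2 (opp_vector V) us as) (map inverse zs) w
       (map2 (-) (map opp_exponent as) ks))"
proof -
  have "monom zs ks = monom zs (map opp_exponent as) *
      monom (map inverse zs) (map2 (-) (map opp_exponent as) ks)"
    if "as \<in> listset (map (opp_terms V) us)" for as
    using assms(3-5) length_listset[OF that] by (intro monom_shift) auto
  then show ?thesis
    unfolding opp_Y_ops_expansion[OF assms(1-3)] sum_distrib_right prod_series_def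
    by (intro sum.cong) (simp_all add: mult_ac)
qed

lemma product_rationalityD:
  assumes "product_rationality G D Y" "f \<in> D"
  shows "\<exists>R. rational_poles (length us) R \<and> (\<forall>zs. length zs = length us \<and> region_desc zs \<longrightarrow>
    abs_conv_to (prod_series Y f us zs w) {ks. length ks = length us} (R zs))"
  using assms unfolding product_rationality_def by blast

lemma opp_series_abs_conv:
  assumes "left_module V W" "Vector_Spaces.linear (ws W) (*) f"
    and "length us = n" "length zs = n" "\<And>i. i < n \<Longrightarrow> zs ! i \<noteq> 0"
    and conv: "\<And>as. as \<in> listset (map (opp_terms V) us) \<Longrightarrow>
      abs_conv_to (prod_series (wY W) f (map2 (opp_vector V) us as) (map inverse zs) w)
        {ks. length ks = n} (S as)"
  shows "abs_conv_to (\<lambda>ks. f (ops (opp_Y V W) us ks w) * monom zs ks) {ks. length ks = n}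
    (\<Sum>as\<in>listset (map (opp_terms V) us).
       (prod_list (map opp_coefficient as) * monom zs (map opp_exponent as)) * S as)"
proof (rule abs_conv_to_finite_combination[OF finite_listset conv])
  show "finite A" if "A \<in> set (map (opp_terms V) us)" for A
    using that finite_opp_terms by auto
  show "bij_betw (map2 (-) (map opp_exponent as)) {ks. length ks = n} {ks. length ks = n}"
    if "as \<in> listset (map (opp_terms V) us)" for as
    using length_listset[OF that] assms(3) by (intro bij_betw_map2_diff) simp
  show "f (ops (opp_Y V W) us ks w) * monom zs ks = (\<Sum>as\<in>listset (map (opp_terms V) us).
      (prod_list (map opp_coefficient as) * monom zs (map opp_exponent as)) *
      prod_series (wY W) f (map2 (opp_vector V) us as) (map inverse zs) w (map2 (-) (map opp_exponent as) ks))"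
    if "ks \<in> {ks. length ks = n}" for ks
    using that assms by (intro opp_series_term_expansion) auto
qed

theorem mainTheorem16:
  fixes V :: "('v::ab_group_add) mosva_data"
    and W :: "('v, 'w::ab_group_add) lmod_data"
  assumes "mobius_mosva V"
    and "mobius_left_module V W"
  shows "\<forall>n us w f. n \<ge> 1 \<and> length us = n \<and> graded_dual (ws W) (wgr W) f \<longrightarrow>
           (\<exists>R. rational_poles n R \<and>
              (\<forall>zs. length zs = n \<and> region_desc zs \<longrightarrow>
                 abs_conv_to (\<lambda>ks. f (ops (opp_Y V W) (rev us) ks w) * monom (rev zs) ks)
                             {ks. length ks = n} (R zs)))"
proof (intro allI impI, elim conjE)
  fix n :: nat and us :: "'v list" and w :: 'w and f :: "'w \<Rightarrow> complex"
  assume n: "length us = n" and dual: "graded_dual (ws W) (wgr W) f"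
  have module: "left_module V W" using assms(2) by (simp add: mobius_left_module_def)
  then have rationality: "product_rationality (wgr W) {f. graded_dual (ws W) (wgr W) f} (wY W)"
    by (simp add: left_module_def)
  define choices where "choices = listset (map (opp_terms V) (rev us))"
  have length_choices: "length as = n" if "as \<in> choices" for as
    using length_listset[OF that[unfolded choices_def]] n by simp
  have "\<exists>R. rational_poles n R \<and> (\<forall>zs. length zs = n \<and> region_desc zs \<longrightarrow>
      abs_conv_to (prod_series (wY W) f (map2 (opp_vector V) (rev us) as) zs w) {ks. length ks = n} (R zs))"
    if "as \<in> choices" for as
    using product_rationalityD[OF rationality, of f "map2 (opp_vector V) (rev us) as" w]
      dual length_choices[OF that] n
    by simp
  then obtain RR where RR: "\<And>as. as \<in> choices \<Longrightarrow> rational_poles n (RR as) \<and>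
      (\<forall>zs. length zs = n \<and> region_desc zs \<longrightarrow> abs_conv_to
        (prod_series (wY W) f (map2 (opp_vector V) (rev us) as) zs w) {ks. length ks = n} (RR as zs))"
    by metis
  show "\<exists>R. rational_poles n R \<and> (\<forall>zs. length zs = n \<and> region_desc zs \<longrightarrow>
      abs_conv_to (\<lambda>ks. f (ops (opp_Y V W) (rev us) ks w) * monom (rev zs) ks) {ks. length ks = n} (R zs))"
  proof (intro exI conjI allI impI)
    show "rational_poles n (\<lambda>zs. \<Sum>as\<in>choices.
        (prod_list (map opp_coefficient as) * monom (rev zs) (map opp_exponent as)) * RR as (reflect zs))"
      using RR length_choices unfolding choices_def
      by (intro rational_poles_sum rational_poles_mult rational_poles_const rational_poles_monom_rev
          rational_poles_reflect finite_listset) (auto simp: finite_opp_terms)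
    fix zs assume zs: "length zs = n \<and> region_desc zs"
    then show "abs_conv_to (\<lambda>ks. f (ops (opp_Y V W) (rev us) ks w) * monom (rev zs) ks) {ks. length ks = n}
        (\<Sum>as\<in>choices. (prod_list (map opp_coefficient as) * monom (rev zs) (map opp_exponent as)) *
          RR as (reflect zs))"
      unfolding choices_def using dual RR[unfolded choices_def] region_desc_reflect[of zs] n
      by (intro opp_series_abs_conv[OF module])
         (auto simp: graded_dual_def region_desc_def rev_nth reflect_def)
  qed
qed

end
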